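(* Let $\mathcal{H}$ be a finite-dimensional Hilbert space, $U$ a unitary on $\mathcal{H}$ and $\Pi,\widetilde\Pi$ orthogonal projectors on $\mathcal{H}$. Let $n\ge1$, $\Phi=(\phi_1,\ldots,\phi_n)\in\mathbb{R}^n$, and let $P\in\mathbb{C}[x]$ be a polynomial of degree at most $n$ such that for all $x\in[-1,1]$ the top-left entry of $\prod_{j=1}^n\left(e^{i\phi_j\sigma_z}R(x)\right)$ equals $P(x)$ (such a $P$ exists and has parity $(n\bmod 2)$). Then $$P^{(SV)}(\widetilde\Pi U\Pi)=\begin{cases}\widetilde\Pi U_\Phi\Pi & \text{if } n \text{ is odd},\\ \Pi U_\Phi\Pi & \text{if } n\text{ is even}.\end{cases}$$
   Context: $\sigma_z=\mathrm{diag}(1,-1)$; $R(x)=\begin{pmatrix} x & \sqrt{1-x^2}\\ \sqrt{1-x^2} & -x\end{pmatrix}$; $\prod_{j=1}^n M_j=M_1\cdots M_n$. Alternating phase modulation sequence: for $n$ odd, $U_\Phi:=e^{i\phi_1(2\widetilde\Pi-I)}U\prod_{j=1}^{(n-1)/2}\left(e^{i\phi_{2j}(2\Pi-I)}U^\dagger e^{i\phi_{2j+1}(2\widetilde\Pi-I)}U\right)$; for $n$ even, $U_\Phi:=\prod_{j=1}^{n/2}\left(e^{i\phi_{2j-1}(2\Pi-I)}U^\dagger e^{i\phi_{2j}(2\widetilde\Pi-I)}U\right)$. Singular value transformation: let $A=\widetilde\Pi U\Pi$, $d=\mathrm{rank}\,\Pi$, $\tilde d=\mathrm{rank}\,\widetilde\Pi$,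 $d_{\min}=\min(d,\tilde d)$, and write $A=\sum_{i=1}^{d_{\min}}\varsigma_i|\tilde\psi_i\rangle\langle\psi_i|$ with $\varsigma_i\ge0$, $(|\psi_i\rangle)_{i\in[d]}$ an orthonormal basis of $\mathrm{img}\,\Pi$ and $(|\tilde\psi_i\rangle)_{i\in[\tilde d]}$ an orthonormal basis of $\mathrm{img}\,\widetilde\Pi$; set $\varsigma_i:=0$ for $d_{\min}<i\le d$. For an odd function $f$, $f^{(SV)}(A):=\sum_{i=1}^{d_{\min}}f(\varsigma_i)|\tilde\psi_i\rangle\langle\psi_i|$; for an even $f$, $f^{(SV)}(A):=\sum_{i=1}^{d}f(\varsigma_i)|\psi_i\rangle\langle\psi_i|$. *)

theory Defs
  imports "HOL-Analysis.Analysis"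
begin

(* Finite-dimensional Hilbert space modelled as complex^'n for a finite index type 'n;
   operators are complex matrices complex^'n^'n acting by matrix-vector product. *)

definition cmat_scale :: "complex \<Rightarrow> complex^'n^'m \<Rightarrow> complex^'n^'m" where
  "cmat_scale c M = (\<chi> i j. c * M $ i $ j)"

definition adj :: "complex^'n^'m \<Rightarrow> complex^'m^'n" where
  "adj M = (\<chi> i j. cnj (M $ j $ i))"

definition cinner :: "complex^'n \<Rightarrow> complex^'n \<Rightarrow> complex" where
  "cinner v w = (\<Sum>i\<in>UNIV. cnj (v $ i) * w $ i)"

definition outer :: "complex^'m \<Rightarrow> complex^'n \<Rightarrow> complex^'n^'m" where
  "outer a b = (\<chi> i j. a $ i * cnj (b $ j))"

definition unitary_mat :: "complex^'n^'n \<Rightarrow> bool" where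
  "unitary_mat U \<longleftrightarrow> adj U ** U = mat 1 \<and> U ** adj U = mat 1"

definition orth_proj :: "complex^'n^'n \<Rightarrow> bool" where
  "orth_proj P \<longleftrightarrow> P ** P = P \<and> adj P = P"

primrec mpow :: "complex^'n^'n \<Rightarrow> nat \<Rightarrow> complex^'n^'n" where
  "mpow M 0 = mat 1"
| "mpow M (Suc k) = M ** mpow M k"

definition mexp :: "complex^'n^'n \<Rightarrow> complex^'n^'n" where
  "mexp M = (\<Sum>k. (1 / fact k) *\<^sub>R mpow M k)"

primrec mprod :: "(nat \<Rightarrow> complex^'n^'n) \<Rightarrow> nat \<Rightarrow> complex^'n^'n" where
  "mprod f 0 = mat 1"
| "mprod f (Suc m) = mprod f m ** f (Suc m)"

definition phase_op :: "real \<Rightarrow> complex^'n^'n \<Rightarrow> complex^'n^'n" where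
  "phase_op phi Pr = mexp (cmat_scale (\<i> * complex_of_real phi) (cmat_scale 2 Pr - mat 1))"

(* alternating phase modulation sequence U_Phi; phi indexed by 1..n *)
definition U_Phi :: "nat \<Rightarrow> (nat \<Rightarrow> real) \<Rightarrow> complex^'n^'n \<Rightarrow> complex^'n^'n \<Rightarrow> complex^'n^'n
                      \<Rightarrow> complex^'n^'n" where
  "U_Phi n phi U Pr Prt =
     (if odd n then
        phase_op (phi 1) Prt ** U **
        mprod (\<lambda>j. phase_op (phi (2*j)) Pr ** adj U ** phase_op (phi (2*j+1)) Prt ** U) ((n - 1) div 2)
      else
        mprod (\<lambda>j. phase_op (phi (2*j-1)) Pr ** adj U ** phase_op (phi (2*j)) Prt ** U) (n div 2))"

(* 2x2 matrices: indices 1,2 of type 2; entry (1,1) is the top-left entry *)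
definition sigma_z :: "complex^2^2" where
  "sigma_z = vector [vector [1, 0], vector [0, -1]]"

definition Rmat :: "real \<Rightarrow> complex^2^2" where
  "Rmat x = vector [vector [complex_of_real x, complex_of_real (sqrt (1 - x^2))],
                    vector [complex_of_real (sqrt (1 - x^2)), - complex_of_real x]]"

definition qsp_prod :: "nat \<Rightarrow> (nat \<Rightarrow> real) \<Rightarrow> real \<Rightarrow> complex^2^2" where
  "qsp_prod n phi x = mprod (\<lambda>j. mexp (cmat_scale (\<i> * complex_of_real (phi j)) sigma_z) ** Rmat x) n"

definition onb_of_img :: "complex^'n^'n \<Rightarrow> nat \<Rightarrow> (nat \<Rightarrow> complex^'n) \<Rightarrow> bool" where
  "onb_of_img Pr d psi \<longleftrightarrow>
     (\<forall>i<d. \<forall>j<d. cinner (psi i) (psi j) = (if i = j then 1 else 0)) \<and>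
     (\<forall>i<d. psi i \<in> range (\<lambda>v. Pr *v v)) \<and>
     (\<forall>w \<in> range (\<lambda>v. Pr *v v). \<exists>c. w = (\<Sum>i<d. c i *s psi i))"

definition sv_decomp :: "complex^'n^'n \<Rightarrow> complex^'n^'n \<Rightarrow> complex^'n^'n \<Rightarrow> nat \<Rightarrow> nat
                          \<Rightarrow> (nat \<Rightarrow> real) \<Rightarrow> (nat \<Rightarrow> complex^'n) \<Rightarrow> (nat \<Rightarrow> complex^'n) \<Rightarrow> bool" where
  "sv_decomp Pr Prt A d dt s psi psit \<longleftrightarrow>
     onb_of_img Pr d psi \<and> onb_of_img Prt dt psit \<and>
     (\<forall>i<min d dt. 0 \<le> s i) \<and>
     A = (\<Sum>i<min d dt. cmat_scale (complex_of_real (s i)) (outer (psit i) (psi i)))"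

(* f^(SV)(A) for odd f *)
definition sv_odd :: "(real \<Rightarrow> complex) \<Rightarrow> nat \<Rightarrow> nat \<Rightarrow> (nat \<Rightarrow> real)
                       \<Rightarrow> (nat \<Rightarrow> complex^'n) \<Rightarrow> (nat \<Rightarrow> complex^'n) \<Rightarrow> complex^'n^'n" where
  "sv_odd f d dt s psi psit = (\<Sum>i<min d dt. cmat_scale (f (s i)) (outer (psit i) (psi i)))"

(* f^(SV)(A) for even f, with s_i := 0 for min d dt <= i < d *)
definition sv_even :: "(real \<Rightarrow> complex) \<Rightarrow> nat \<Rightarrow> nat \<Rightarrow> (nat \<Rightarrow> real)
                       \<Rightarrow> (nat \<Rightarrow> complex^'n) \<Rightarrow> complex^'n^'n" where
  "sv_even f d dt s psi =
     (\<Sum>i<d. cmat_scale (f (if i < min d dt then s i else 0)) (outer (psi i) (psi i)))"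

end

theory Submission
  imports Defs
begin

text \<open>
  Jordan's lemma for the pair of projectors: a right singular vector v of Prt U Pr with singular
  value s and its left partner w can be completed by vectors v' in ker Pr and w' in ker Prt such
  that U maps span {v, v'} to span {w, w'} with matrix R(s) in these bases; since R(s) is an
  involution, adj U maps back with the same matrix. On these planes every phase
  e^(i phi (2 Pr - I)) acts as e^(i phi sigma_z), so U_Phi applied to v reproduces the QSP product
  of the e^(i phi_j sigma_z) R(s), whose top-left entry is P(s). Projecting gives P(s) w for odd n
  and P(s) v for even n, and both sides of the claim are determined by their values on the
  basis of img Pr.
\<close>

section \<open>Complex matrix algebra\<close>

lemma cmat_scale_mult_left: "cmat_scale c A ** B = cmat_scale c (A ** B)"
  by (simp add: cmat_scale_def matrix_matrix_mult_def vec_eq_iff sum_distrib_left mult.assoc)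

lemma cmat_scale_mult_right: "A ** cmat_scale c B = cmat_scale c (A ** B)"
  by (simp add: cmat_scale_def matrix_matrix_mult_def vec_eq_iff sum_distrib_left mult_ac)

lemma cmat_scale_add: "cmat_scale c (A + B) = cmat_scale c A + cmat_scale c B"
  by (simp add: cmat_scale_def vec_eq_iff algebra_simps)

lemma cmat_scale_cmat_scale: "cmat_scale c (cmat_scale d A) = cmat_scale (c * d) A"
  by (simp add: cmat_scale_def vec_eq_iff)

lemma cmat_scale_mulv: "cmat_scale c A *v x = c *s (A *v x)"
  by (simp add: cmat_scale_def matrix_vector_mult_def vec_eq_iff sum_distrib_left mult_ac)

lemma scaleR_eq_cmat_scale: "(r::real) *\<^sub>R (M::complex^'n^'m) = cmat_scale (complex_of_real r) M"
  by (simp add: vec_eq_iff cmat_scale_def scaleR_conv_of_real[where 'a=complex])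

lemma bounded_linear_cmat_scale: "bounded_linear (\<lambda>t. cmat_scale t (A::complex^'n^'m))"
proof -
  have "linear (\<lambda>t. cmat_scale t A)"
    by (rule linearI)
       (simp_all add: cmat_scale_def vec_eq_iff algebra_simps scaleR_conv_of_real[where 'a=complex])
  then show ?thesis
    by (simp add: linear_conv_bounded_linear)
qed

lemma matrix_diff_ldistrib: "(A::'a::ring_1^'n^'m) ** (B - C) = A ** B - A ** C"
  by (simp add: matrix_matrix_mult_def vec_eq_iff algebra_simps sum_subtractf)

lemma matrix_diff_rdistrib: "((A::'a::ring_1^'n^'m) - B) ** C = A ** C - B ** C"
  by (simp add: matrix_matrix_mult_def vec_eq_iff algebra_simps sum_subtractf)

lemma matrix_vector_mult_sum_left: "(\<Sum>i\<in>I. M i) *v x = (\<Sum>i\<in>I. M i *v (x::complex^'n))"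
  by (induct I rule: infinite_finite_induct) (simp_all add: matrix_vector_mult_add_rdistrib)

lemma matrix_vector_mult_lincomb:
  "(M::complex^'n^'m) *v (\<Sum>k\<in>I. c k *s v k) = (\<Sum>k\<in>I. c k *s (M *v v k))"
  by (induct I rule: infinite_finite_induct)
     (simp_all add: matrix_vector_right_distrib vector_scalar_commute)

lemma adj_mult: "adj (A ** B) = adj B ** adj (A::complex^'n^'m)"
  by (simp add: adj_def matrix_matrix_mult_def vec_eq_iff mult.commute)

lemma adj_sum: "adj (\<Sum>i\<in>I. M i) = (\<Sum>i\<in>I. adj (M i::complex^'n^'m))"
  by (induct I rule: infinite_finite_induct) (simp_all add: adj_def vec_eq_iff)

lemma adj_cmat_scale_real_outer:
  "adj (cmat_scale (complex_of_real r) (outer a b)) = cmat_scale (complex_of_real r) (outer b a)"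
  by (simp add: adj_def cmat_scale_def outer_def vec_eq_iff)

lemma outer_mulv: "outer a b *v x = cinner b x *s a"
  by (simp add: outer_def matrix_vector_mult_def cinner_def vec_eq_iff sum_distrib_left mult_ac)

lemma cinner_adj: "cinner (M *v x) y = cinner x (adj M *v y)"
  unfolding cinner_def matrix_vector_mult_def adj_def
  by (simp add: sum_distrib_left sum_distrib_right) (subst sum.swap, simp add: mult_ac)

lemma cinner_diff_right: "cinner x (y - z) = cinner x y - cinner x z"
  by (simp add: cinner_def algebra_simps sum_subtractf)

lemma cinner_diff_left: "cinner (x - y) z = cinner x z - cinner y z"
  by (simp add: cinner_def algebra_simps sum_subtractf)

lemma cinner_scale_right: "cinner x (c *s y) = c * cinner x y"
  by (simp add: cinner_def sum_distrib_left mult_ac)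

lemma cinner_scale_left: "cinner (c *s x) y = cnj c * cinner x y"
  by (simp add: cinner_def sum_distrib_left mult_ac)

lemma cinner_commute: "cnj (cinner x y) = cinner y x"
  by (simp add: cinner_def mult.commute)

lemma cinner_self: "cinner x x = complex_of_real (\<Sum>i\<in>UNIV. (cmod (x $ i))\<^sup>2)"
  unfolding cinner_def of_real_sum
  by (intro sum.cong refl) (metis complex_norm_square of_real_power mult.commute)

lemma cinner_self_eq_0: "cinner x x = 0 \<Longrightarrow> x = 0"
  unfolding cinner_self of_real_eq_0_iff
  by (subst (asm) sum_nonneg_eq_0_iff) (auto simp: vec_eq_iff)

lemma unitary_adj_mulv: "unitary_mat U \<Longrightarrow> adj U *v (U *v x) = x"
  by (simp add: unitary_mat_def matrix_vector_mul_assoc)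

lemma unitary_mulv_adj: "unitary_mat U \<Longrightarrow> U *v (adj U *v x) = x"
  by (simp add: unitary_mat_def matrix_vector_mul_assoc)

lemma orth_proj_idem_mulv: "orth_proj P \<Longrightarrow> P *v (P *v x) = P *v x"
  by (simp add: orth_proj_def matrix_vector_mul_assoc)

lemma orth_proj_cinner: "orth_proj P \<Longrightarrow> cinner (P *v x) y = cinner x (P *v y)"
  by (simp add: orth_proj_def cinner_adj)

lemma sum_outer_mult_orth_proj:
  assumes "orth_proj P" "\<forall>i\<in>I. P *v b i = b i"
  shows "(\<Sum>i\<in>I. cmat_scale (g i) (outer (a i) (b i))) ** P
       = (\<Sum>i\<in>I. cmat_scale (g i) (outer (a i) (b i)))"
proof -
  have "cinner (b i) (P *v x) = cinner (b i) x" if "i \<in> I" for i x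
    using orth_proj_cinner[OF assms(1), of "b i" x] assms(2) that by simp
  then show ?thesis
    by (simp add: matrix_eq matrix_vector_mul_assoc[symmetric] matrix_vector_mult_sum_left
        cmat_scale_mulv outer_mulv)
qed

lemma sum_outer_mulv_orthonormal:
  fixes N k :: nat
  assumes "\<forall>i<N. cinner (b i) (b k) = (if i = k then 1 else 0)"
  shows "(\<Sum>i<N. cmat_scale (g i) (outer (a i) (b i))) *v b k = (if k < N then g k *s a k else 0)"
proof -
  have "(\<Sum>i<N. cmat_scale (g i) (outer (a i) (b i))) *v b k
      = (\<Sum>i<N. if i = k then g i *s a i else 0)"
    unfolding matrix_vector_mult_sum_left cmat_scale_mulv outer_mulv
    by (rule sum.cong) (auto simp: assms)
  also have "\<dots> = (if k < N then g k *s a k else 0)"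
    using sum.delta[of "{..<N}" k "\<lambda>i. g i *s a i"] by simp
  finally show ?thesis .
qed

section \<open>Phases generated by reflections\<close>

lemma mpow_scaled_reflection:
  fixes P :: "complex^'n^'n"
  assumes PP: "P ** P = P"
  shows "mpow (cmat_scale z (cmat_scale 2 P - mat 1)) k
       = cmat_scale (z ^ k) P + cmat_scale ((- z) ^ k) (mat 1 - P)"
proof (induction k)
  case 0
  then show ?case by (simp add: cmat_scale_def vec_eq_iff)
next
  case (Suc k)
  have XP: "(cmat_scale 2 P - mat 1) ** P = P"
    unfolding matrix_diff_rdistrib cmat_scale_mult_left PP matrix_mul_lid
    by (simp add: cmat_scale_def vec_eq_iff)
  have XQ: "(cmat_scale 2 P - mat 1) ** (mat 1 - P) = - (mat 1 - P)"
    unfolding matrix_diff_ldistrib XP matrix_mul_rid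
    by (simp add: cmat_scale_def vec_eq_iff)
  have "mpow (cmat_scale z (cmat_scale 2 P - mat 1)) (Suc k)
      = cmat_scale z ((cmat_scale 2 P - mat 1) **
          (cmat_scale (z ^ k) P + cmat_scale ((- z) ^ k) (mat 1 - P)))"
    by (simp only: mpow.simps Suc cmat_scale_mult_left)
  also have "\<dots> = cmat_scale z (cmat_scale (z ^ k) P + cmat_scale ((- z) ^ k) (- (mat 1 - P)))"
    by (simp only: matrix_add_ldistrib cmat_scale_mult_right XP XQ)
  also have "\<dots> = cmat_scale (z ^ Suc k) P + cmat_scale ((- z) ^ Suc k) (mat 1 - P)"
    by (simp add: cmat_scale_def vec_eq_iff ring_distribs right_diff_distrib)
  finally show ?case .
qed

lemma mexp_scaled_reflection:
  fixes P :: "complex^'n^'n"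
  assumes "P ** P = P"
  shows "mexp (cmat_scale z (cmat_scale 2 P - mat 1))
       = cmat_scale (exp z) P + cmat_scale (exp (- z)) (mat 1 - P)"
proof -
  have "(\<lambda>k. cmat_scale (z ^ k /\<^sub>R fact k) P + cmat_scale ((- z) ^ k /\<^sub>R fact k) (mat 1 - P))
        sums (cmat_scale (exp z) P + cmat_scale (exp (- z)) (mat 1 - P))"
    by (intro sums_add bounded_linear.sums[OF bounded_linear_cmat_scale] exp_converges)
  moreover have "(\<lambda>k. cmat_scale (z ^ k /\<^sub>R fact k) P + cmat_scale ((- z) ^ k /\<^sub>R fact k) (mat 1 - P))
      = (\<lambda>k. (1 / fact k) *\<^sub>R mpow (cmat_scale z (cmat_scale 2 P - mat 1)) k)"
    by (simp add: mpow_scaled_reflection[OF assms] scaleR_eq_cmat_scale cmat_scale_add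
        cmat_scale_cmat_scale scaleR_conv_of_real divide_inverse mult.commute)
  ultimately show ?thesis
    unfolding mexp_def by (simp only: sums_unique[symmetric])
qed

lemma phase_op_mulv_img:
  "P ** P = P \<Longrightarrow> P *v a = a \<Longrightarrow> phase_op phi P *v a = exp (\<i> * complex_of_real phi) *s a"
  by (simp add: phase_op_def mexp_scaled_reflection matrix_vector_mult_add_rdistrib cmat_scale_mulv
      matrix_vector_mult_diff_rdistrib)

lemma phase_op_mulv_ker:
  "P ** P = P \<Longrightarrow> P *v a = 0 \<Longrightarrow> phase_op phi P *v a = exp (- (\<i> * complex_of_real phi)) *s a"
  by (simp add: phase_op_def mexp_scaled_reflection matrix_vector_mult_add_rdistrib cmat_scale_mulv
      matrix_vector_mult_diff_rdistrib)

text \<open>Since sigma_z = 2 proj_e1 - I, the qubit phases e^(i phi sigma_z) are reflection phases too.\<close>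

definition proj_e1 :: "complex^2^2" where
  "proj_e1 = (\<chi> i j. if i = 1 \<and> j = 1 then 1 else 0)"

lemma qsp_prod_eq_phase_op:
  "qsp_prod n phi x = mprod (\<lambda>j. phase_op (phi j) proj_e1 ** Rmat x) n"
proof -
  have "sigma_z = cmat_scale 2 proj_e1 - mat 1"
    by (simp add: sigma_z_def proj_e1_def cmat_scale_def mat_def vec_eq_iff forall_2)
  then show ?thesis
    by (simp add: qsp_prod_def phase_op_def)
qed

lemma phase_op_proj_e1_mulv:
  "phase_op phi proj_e1 *v y
     = vector [exp (\<i> * complex_of_real phi) * y $ 1, exp (- (\<i> * complex_of_real phi)) * y $ 2]"
proof -
  have "proj_e1 ** proj_e1 = proj_e1"
    by (simp add: proj_e1_def matrix_matrix_mult_def vec_eq_iff sum_2 forall_2)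
  then show ?thesis
    unfolding phase_op_def mexp_scaled_reflection[OF \<open>proj_e1 ** proj_e1 = proj_e1\<close>]
    by (simp add: vec_eq_iff forall_2 matrix_vector_mult_def sum_2 cmat_scale_def proj_e1_def mat_def)
qed

lemma Rmat_mulv:
  "Rmat x *v y = vector [complex_of_real x * y $ 1 + complex_of_real (sqrt (1 - x\<^sup>2)) * y $ 2,
                         complex_of_real (sqrt (1 - x\<^sup>2)) * y $ 1 - complex_of_real x * y $ 2]"
  by (simp add: Rmat_def vec_eq_iff forall_2 matrix_vector_mult_def sum_2)

lemma Rmat_involution:
  assumes "\<bar>x\<bar> \<le> 1"
  shows "Rmat x ** Rmat x = mat 1"
proof -
  have "(sqrt (1 - x\<^sup>2))\<^sup>2 = 1 - x\<^sup>2"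
    using assms by (simp add: abs_square_le_1)
  then have "complex_of_real x * complex_of_real x
      + complex_of_real (sqrt (1 - x\<^sup>2)) * complex_of_real (sqrt (1 - x\<^sup>2)) = 1"
    by (metis add_diff_cancel_left' diff_add_cancel of_real_1 of_real_add of_real_mult power2_eq_square)
  then show ?thesis
    by (simp add: Rmat_def matrix_matrix_mult_def mat_def vec_eq_iff forall_2 sum_2 algebra_simps)
qed

section \<open>Simulating the QSP product on an invariant plane\<close>

definition plane_embed :: "complex^'n \<Rightarrow> complex^'n \<Rightarrow> complex^2 \<Rightarrow> complex^'n" where
  "plane_embed a b y = y $ 1 *s a + y $ 2 *s b"

lemma plane_embed_e1: "plane_embed a b (axis 1 1) = a"
  by (simp add: plane_embed_def axis_def)

lemma orth_proj_plane_embed: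
  "Pr *v a = a \<Longrightarrow> Pr *v b = 0 \<Longrightarrow> Pr *v plane_embed a b y = y $ 1 *s a"
  by (simp add: plane_embed_def matrix_vector_right_distrib vector_scalar_commute)

lemma phase_op_plane_embed:
  assumes "P ** P = P" "P *v a = a" "P *v b = 0"
  shows "phase_op phi P *v plane_embed a b y = plane_embed a b (phase_op phi proj_e1 *v y)"
  by (simp add: plane_embed_def phase_op_proj_e1_mulv matrix_vector_right_distrib vector_scalar_commute
      phase_op_mulv_img[OF assms(1,2)] phase_op_mulv_ker[OF assms(1,3)] vec_eq_iff)

lemma rotation_plane_embed:
  assumes "U *v a = complex_of_real x *s c + complex_of_real (sqrt (1 - x\<^sup>2)) *s d"
    and "U *v b = complex_of_real (sqrt (1 - x\<^sup>2)) *s c - complex_of_real x *s d"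
  shows "U *v plane_embed a b y = plane_embed c d (Rmat x *v y)"
  by (simp add: plane_embed_def Rmat_mulv matrix_vector_right_distrib vector_scalar_commute assms
      vec_eq_iff algebra_simps)

lemma rotation_adj_plane_embed:
  assumes "unitary_mat U" "\<bar>x\<bar> \<le> 1"
    and "U *v a = complex_of_real x *s c + complex_of_real (sqrt (1 - x\<^sup>2)) *s d"
    and "U *v b = complex_of_real (sqrt (1 - x\<^sup>2)) *s c - complex_of_real x *s d"
  shows "adj U *v plane_embed c d y = plane_embed a b (Rmat x *v y)"
proof -
  have "plane_embed c d y = plane_embed c d (Rmat x *v (Rmat x *v y))"
    by (simp add: matrix_vector_mul_assoc Rmat_involution[OF assms(2)])
  also have "\<dots> = U *v plane_embed a b (Rmat x *v y)"
    by (rule rotation_plane_embed[OF assms(3,4), symmetric])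
  finally show ?thesis
    using unitary_adj_mulv[OF assms(1)] by simp
qed

lemma mprod_plane_embed:
  assumes "\<And>j y. F j *v plane_embed a b y = plane_embed a b (G j *v y)"
  shows "mprod F m *v plane_embed a b y = plane_embed a b (mprod G m *v y)"
  by (induction m arbitrary: y) (simp_all add: matrix_vector_mul_assoc[symmetric] assms)

lemma mprod_pairs_even: "mprod h (2 * m) = mprod (\<lambda>j. h (2 * j - 1) ** h (2 * j)) m"
  by (induction m) (simp_all add: matrix_mul_assoc)

lemma mprod_pairs_odd: "mprod h (2 * m + 1) = h 1 ** mprod (\<lambda>j. h (2 * j) ** h (2 * j + 1)) m"
  by (induction m) (simp_all add: matrix_mul_assoc)

lemma U_Phi_plane_embed:
  assumes U: "unitary_mat U" and P: "orth_proj Pr" and Pt: "orth_proj Prt"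
    and x: "\<bar>x\<bar> \<le> 1"
    and v: "Pr *v v = v" and v': "Pr *v v' = 0" and w: "Prt *v w = w" and w': "Prt *v w' = 0"
    and Uv: "U *v v = complex_of_real x *s w + complex_of_real (sqrt (1 - x\<^sup>2)) *s w'"
    and Uv': "U *v v' = complex_of_real (sqrt (1 - x\<^sup>2)) *s w - complex_of_real x *s w'"
  shows "U_Phi n phi U Pr Prt *v plane_embed v v' y =
          (if odd n then plane_embed w w' (qsp_prod n phi x *v y)
           else plane_embed v v' (qsp_prod n phi x *v y))"
proof -
  have PP: "Pr ** Pr = Pr" and PPt: "Prt ** Prt = Prt"
    using P Pt by (auto simp: orth_proj_def)
  note steps = matrix_vector_mul_assoc[symmetric] rotation_plane_embed[OF Uv Uv']
    rotation_adj_plane_embed[OF U x Uv Uv'] phase_op_plane_embed[OF PPt w w']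
    phase_op_plane_embed[OF PP v v']
  have round_trip: "(phase_op p1 Pr ** adj U ** phase_op p2 Prt ** U) *v plane_embed v v' y
      = plane_embed v v' ((phase_op p1 proj_e1 ** Rmat x ** phase_op p2 proj_e1 ** Rmat x) *v y)"
    for p1 p2 y
    by (simp only: steps)
  show ?thesis
  proof (cases "odd n")
    case True
    then obtain m where n: "n = 2 * m + 1"
      using oddE by blast
    have "qsp_prod n phi x = phase_op (phi 1) proj_e1 ** Rmat x **
        mprod (\<lambda>j. phase_op (phi (2 * j)) proj_e1 ** Rmat x **
                    phase_op (phi (2 * j + 1)) proj_e1 ** Rmat x) m"
      unfolding qsp_prod_eq_phase_op n mprod_pairs_odd by (simp add: matrix_mul_assoc)
    with True n show ?thesis
      by (simp add: U_Phi_def steps mprod_plane_embed[OF round_trip])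
  next
    case False
    then obtain m where n: "n = 2 * m"
      using evenE by blast
    then show ?thesis
      by (simp add: U_Phi_def qsp_prod_eq_phase_op mprod_pairs_even matrix_mul_assoc
          mprod_plane_embed[OF round_trip])
  qed
qed

section \<open>The plane of a singular pair\<close>

lemma singular_pair_residual_norm:
  assumes U: "unitary_mat U" and Pt: "orth_proj Prt"
    and w: "Prt *v w = w" and vv: "cinner v v = 1" and ww: "cinner w w = 1 \<or> s = 0"
    and Av: "Prt *v (U *v v) = complex_of_real s *s w"
  shows "cinner (U *v v - complex_of_real s *s w) (U *v v - complex_of_real s *s w)
       = complex_of_real (1 - s\<^sup>2)"
proof -
  have ws: "complex_of_real s * cinner w w = complex_of_real s"
    using ww by auto
  have "cinner (U *v v) w = cinner (U *v v) (Prt *v w)"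
    using w by simp
  also have "\<dots> = complex_of_real s * cinner w w"
    by (simp add: orth_proj_cinner[OF Pt, symmetric] Av cinner_scale_left)
  finally have Uv_w: "cinner (U *v v) w = complex_of_real s"
    using ws by simp
  then have w_Uv: "cinner w (U *v v) = complex_of_real s"
    by (metis cinner_commute complex_cnj_complex_of_real)
  have "cinner (U *v v) (U *v v) = 1"
    by (simp add: cinner_adj unitary_adj_mulv[OF U] vv)
  with Uv_w w_Uv ws show ?thesis
    by (simp add: cinner_diff_left cinner_diff_right cinner_scale_left cinner_scale_right
        power2_eq_square mult.assoc)
qed

lemma singular_value_le_one:
  assumes "unitary_mat U" "orth_proj Prt" "Prt *v w = w" "cinner v v = 1" "cinner w w = 1 \<or> s = 0"
    and "Prt *v (U *v v) = complex_of_real s *s w"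
  shows "s\<^sup>2 \<le> 1"
proof -
  have "complex_of_real (1 - s\<^sup>2) = complex_of_real (\<Sum>i\<in>UNIV. (cmod ((U *v v - complex_of_real s *s w) $ i))\<^sup>2)"
    using singular_pair_residual_norm[OF assms] by (simp only: cinner_self)
  then have "1 - s\<^sup>2 = (\<Sum>i\<in>UNIV. (cmod ((U *v v - complex_of_real s *s w) $ i))\<^sup>2)"
    using of_real_eq_iff by blast
  moreover have "0 \<le> (\<Sum>i\<in>UNIV. (cmod ((U *v v - complex_of_real s *s w) $ i))\<^sup>2)"
    by (simp add: sum_nonneg)
  ultimately show ?thesis
    by simp
qed

text \<open>
  With c = sqrt (1 - s^2), the completions are w' = (U v - s w) / c and v' = (adj U w - s v) / c;
  when c = 0 the residual U v - s w vanishes and v' = w' = 0 will do.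
\<close>

lemma singular_pair_plane:
  assumes U: "unitary_mat U" and P: "orth_proj Pr" and Pt: "orth_proj Prt"
    and v: "Pr *v v = v" and w: "Prt *v w = w" and vv: "cinner v v = 1"
    and ww: "cinner w w = 1 \<or> s = 0"
    and Av: "Prt *v (U *v v) = complex_of_real s *s w"
    and Aw: "Pr *v (adj U *v w) = complex_of_real s *s v"
  obtains v' w' where "Pr *v v' = 0" "Prt *v w' = 0"
    "U *v v = complex_of_real s *s w + complex_of_real (sqrt (1 - s\<^sup>2)) *s w'"
    "U *v v' = complex_of_real (sqrt (1 - s\<^sup>2)) *s w - complex_of_real s *s w'"
proof -
  define u where "u = U *v v - complex_of_real s *s w"
  define c where "c = sqrt (1 - s\<^sup>2)"
  have s2: "s\<^sup>2 \<le> 1"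
    by (rule singular_value_le_one[OF U Pt w vv ww Av])
  have cc: "c * c = 1 - s * s"
    using s2 by (simp add: c_def power2_eq_square[symmetric])
  show ?thesis
  proof (cases "c = 0")
    case True
    then have "cinner u u = 0"
      using singular_pair_residual_norm[OF U Pt w vv ww Av] cc
      by (simp add: u_def power2_eq_square flip: of_real_mult)
    then have "U *v v = complex_of_real s *s w"
      unfolding u_def by (metis cinner_self_eq_0 eq_iff_diff_eq_0)
    with True show ?thesis
      by (intro that[of 0 0]) (simp_all add: c_def)
  next
    case False
    define w' where "w' = complex_of_real (1 / c) *s u"
    define v' where "v' = complex_of_real (1 / c) *s (adj U *v w - complex_of_real s *s v)"
    have Uv: "U *v v = complex_of_real s *s w + complex_of_real c *s w'"
      using False by (simp add: w'_def u_def vector_smult_assoc)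
    have "complex_of_real c * complex_of_real c = 1 - complex_of_real s * complex_of_real s"
      using cc by (metis of_real_1 of_real_diff of_real_mult)
    then have residual: "w - complex_of_real s *s (U *v v)
             = complex_of_real c *s (complex_of_real c *s w - complex_of_real s *s w')"
      unfolding Uv by (simp add: vec_eq_iff algebra_simps) (metis distrib_right mult.assoc mult_1)
    have "U *v v' = complex_of_real (1 / c) *s (w - complex_of_real s *s (U *v v))"
      by (simp add: v'_def vector_scalar_commute matrix_vector_mult_diff_distrib
          unitary_mulv_adj[OF U])
    also have "\<dots> = complex_of_real c *s w - complex_of_real s *s w'"
      using False by (simp only: residual vector_smult_assoc) simp
    finally have Uv': "U *v v' = complex_of_real c *s w - complex_of_real s *s w'" .
    have "Pr *v v' = 0"
      by (simp add: v'_def vector_scalar_commute matrix_vector_mult_diff_distrib Aw v)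
    moreover have "Prt *v w' = 0"
      by (simp add: w'_def u_def vector_scalar_commute matrix_vector_mult_diff_distrib Av w)
    ultimately show ?thesis
      using Uv Uv' that unfolding c_def by blast
  qed
qed

lemma U_Phi_singular_pair:
  assumes U: "unitary_mat U" and P: "orth_proj Pr" and Pt: "orth_proj Prt"
    and v: "Pr *v v = v" and w: "Prt *v w = w" and vv: "cinner v v = 1"
    and ww: "cinner w w = 1 \<or> s = 0" and s: "0 \<le> s"
    and Av: "Prt *v (U *v v) = complex_of_real s *s w"
    and Aw: "Pr *v (adj U *v w) = complex_of_real s *s v"
  shows "if odd n then Prt *v (U_Phi n phi U Pr Prt *v v) = qsp_prod n phi s $ 1 $ 1 *s w
         else Pr *v (U_Phi n phi U Pr Prt *v v) = qsp_prod n phi s $ 1 $ 1 *s v"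
proof -
  obtain v' w' where v': "Pr *v v' = 0" and w': "Prt *v w' = 0"
    and Uv: "U *v v = complex_of_real s *s w + complex_of_real (sqrt (1 - s\<^sup>2)) *s w'"
    and Uv': "U *v v' = complex_of_real (sqrt (1 - s\<^sup>2)) *s w - complex_of_real s *s w'"
    using singular_pair_plane[OF U P Pt v w vv ww Av Aw] .
  have "\<bar>s\<bar> \<le> 1"
    using singular_value_le_one[OF U Pt w vv ww Av] s by (simp add: abs_square_le_1)
  with U_Phi_plane_embed[OF U P Pt _ v v' w w' Uv Uv', of n phi "axis 1 1"]
  have "U_Phi n phi U Pr Prt *v v = (if odd n then plane_embed w w' (qsp_prod n phi s *v axis 1 1)
                                     else plane_embed v v' (qsp_prod n phi s *v axis 1 1))"
    by (simp add: plane_embed_e1)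
  moreover have "(qsp_prod n phi s *v axis 1 1) $ 1 = qsp_prod n phi s $ 1 $ 1"
    by (simp add: matrix_vector_mult_def axis_def sum_2)
  ultimately show ?thesis
    by (simp add: orth_proj_plane_embed[OF v v'] orth_proj_plane_embed[OF w w'])
qed

section \<open>Singular value decompositions\<close>

lemma onb_of_img_fixed: "orth_proj P \<Longrightarrow> onb_of_img P d psi \<Longrightarrow> i < d \<Longrightarrow> P *v psi i = psi i"
  unfolding onb_of_img_def by (auto simp: orth_proj_idem_mulv)

lemma onb_of_img_orthonormal:
  "onb_of_img P d psi \<Longrightarrow> i < d \<Longrightarrow> j < d \<Longrightarrow> cinner (psi i) (psi j) = (if i = j then 1 else 0)"
  unfolding onb_of_img_def by blast

lemma matrix_eq_on_onb:
  assumes onb: "onb_of_img P d psi" and "A ** P = A" "B ** P = B"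
    and agree: "\<And>k. k < d \<Longrightarrow> A *v psi k = B *v psi k"
  shows "A = B"
proof (rule iffD2[OF matrix_eq], intro allI)
  fix x
  obtain c where c: "P *v x = (\<Sum>k<d. c k *s psi k)"
    using onb unfolding onb_of_img_def by blast
  have "A *v x = A *v (P *v x)"
    by (metis \<open>A ** P = A\<close> matrix_vector_mul_assoc)
  also have "\<dots> = B *v (P *v x)"
    by (simp add: c matrix_vector_mult_lincomb agree)
  also have "\<dots> = B *v x"
    by (metis \<open>B ** P = B\<close> matrix_vector_mul_assoc)
  finally show "A *v x = B *v x" .
qed

lemma sv_decomp_right:
  assumes P: "orth_proj Pr" and A: "sv_decomp Pr Prt (Prt ** U ** Pr) d dt s psi psit"
    and j: "j < d"
  shows "Prt *v (U *v psi j) = (if j < min d dt then complex_of_real (s j) *s psit j else 0)"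
proof -
  have onb: "onb_of_img Pr d psi"
    using A by (simp add: sv_decomp_def)
  have "Prt *v (U *v psi j) = (Prt ** U ** Pr) *v psi j"
    by (simp add: matrix_vector_mul_assoc[symmetric] onb_of_img_fixed[OF P onb j])
  also have "\<dots> = (if j < min d dt then complex_of_real (s j) *s psit j else 0)"
    using A unfolding sv_decomp_def
    by (simp only:) (rule sum_outer_mulv_orthonormal, use j in \<open>simp add: onb_of_img_orthonormal[OF onb]\<close>)
  finally show ?thesis .
qed

lemma sv_decomp_left:
  assumes P: "orth_proj Pr" and Pt: "orth_proj Prt"
    and A: "sv_decomp Pr Prt (Prt ** U ** Pr) d dt s psi psit" and j: "j < min d dt"
  shows "Pr *v (adj U *v psit j) = complex_of_real (s j) *s psi j"
proof -
  have onb: "onb_of_img Prt dt psit"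
    using A by (simp add: sv_decomp_def)
  have "Pr ** adj U ** Prt = adj (Prt ** U ** Pr)"
    using P Pt by (simp add: adj_mult orth_proj_def matrix_mul_assoc)
  also have "\<dots> = (\<Sum>i<min d dt. cmat_scale (complex_of_real (s i)) (outer (psi i) (psit i)))"
    using A by (simp add: sv_decomp_def adj_sum adj_cmat_scale_real_outer)
  finally have adjA: "Pr ** adj U ** Prt = \<dots>" .
  have "Pr *v (adj U *v psit j) = (Pr ** adj U ** Prt) *v psit j"
    using j by (simp add: matrix_vector_mul_assoc[symmetric] onb_of_img_fixed[OF Pt onb])
  also have "\<dots> = complex_of_real (s j) *s psi j"
    using j unfolding adjA
    by (subst sum_outer_mulv_orthonormal) (auto simp: onb_of_img_orthonormal[OF onb])
  finally show ?thesis .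
qed

lemma sv_odd_mult_orth_proj:
  "orth_proj Pr \<Longrightarrow> onb_of_img Pr d psi \<Longrightarrow> sv_odd f d dt s psi psit ** Pr = sv_odd f d dt s psi psit"
  unfolding sv_odd_def by (rule sum_outer_mult_orth_proj) (auto intro: onb_of_img_fixed)

lemma sv_even_mult_orth_proj:
  "orth_proj Pr \<Longrightarrow> onb_of_img Pr d psi \<Longrightarrow> sv_even f d dt s psi ** Pr = sv_even f d dt s psi"
  unfolding sv_even_def by (rule sum_outer_mult_orth_proj) (auto intro: onb_of_img_fixed)

text \<open>
  A basis vector psi k with k \<ge> min d dt forms a singular pair with w = 0 and singular value 0,
  matching the convention s k := 0 in sv_even.
\<close>

lemma U_Phi_sv_basis:
  assumes U: "unitary_mat U" and P: "orth_proj Pr" and Pt: "orth_proj Prt"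
    and f: "\<forall>x\<in>{0..1}. qsp_prod n phi x $ 1 $ 1 = f x"
    and A: "sv_decomp Pr Prt (Prt ** U ** Pr) d dt s psi psit" and k: "k < d"
  shows "if odd n then (Prt ** U_Phi n phi U Pr Prt ** Pr) *v psi k = sv_odd f d dt s psi psit *v psi k
         else (Pr ** U_Phi n phi U Pr Prt ** Pr) *v psi k = sv_even f d dt s psi *v psi k"
proof -
  define m where "m = min d dt"
  define \<sigma> where "\<sigma> = (if k < m then s k else 0)"
  define w where "w = (if k < m then psit k else 0)"
  have onb: "onb_of_img Pr d psi" and onbt: "onb_of_img Prt dt psit" and s: "\<forall>i<m. 0 \<le> s i"
    using A by (simp_all add: sv_decomp_def m_def)
  have v: "Pr *v psi k = psi k"
    by (rule onb_of_img_fixed[OF P onb k])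
  have w: "Prt *v w = w"
    using onb_of_img_fixed[OF Pt onbt] by (simp add: w_def m_def)
  have vv: "cinner (psi k) (psi k) = 1"
    using onb_of_img_orthonormal[OF onb k k] by simp
  have ww: "cinner w w = 1 \<or> \<sigma> = 0"
    using onb_of_img_orthonormal[OF onbt] by (simp add: w_def \<sigma>_def m_def)
  have \<sigma>: "0 \<le> \<sigma>"
    using s by (simp add: \<sigma>_def)
  have Av: "Prt *v (U *v psi k) = complex_of_real \<sigma> *s w"
    using sv_decomp_right[OF P A k] by (simp add: \<sigma>_def w_def m_def)
  have Aw: "Pr *v (adj U *v w) = complex_of_real \<sigma> *s psi k"
    using sv_decomp_left[OF P Pt A] by (simp add: \<sigma>_def w_def m_def)
  note pair = U_Phi_singular_pair[OF U P Pt v w vv ww \<sigma> Av Aw, of n phi]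
  have "\<sigma>\<^sup>2 \<le> 1"
    by (rule singular_value_le_one[OF U Pt w vv ww Av])
  with f \<sigma> have "qsp_prod n phi \<sigma> $ 1 $ 1 = f \<sigma>"
    by (simp add: power_le_one_iff)
  moreover have "sv_odd f d dt s psi psit *v psi k = f \<sigma> *s w"
    unfolding sv_odd_def m_def[symmetric]
    by (subst sum_outer_mulv_orthonormal)
       (auto simp: k m_def \<sigma>_def w_def onb_of_img_orthonormal[OF onb])
  moreover have "sv_even f d dt s psi *v psi k = f \<sigma> *s psi k"
    unfolding sv_even_def m_def[symmetric]
    by (subst sum_outer_mulv_orthonormal) (auto simp: k \<sigma>_def onb_of_img_orthonormal[OF onb])
  ultimately show ?thesis
    using pair by (simp add: matrix_vector_mul_assoc[symmetric] v)
qed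

theorem mainTheorem8:
  fixes U Pr Prt :: "complex^'n^'n"
    and n :: nat and phi :: "nat \<Rightarrow> real" and P :: "complex poly"
    and d dt :: nat and s :: "nat \<Rightarrow> real" and psi psit :: "nat \<Rightarrow> complex^'n"
  assumes "unitary_mat U" and "orth_proj Pr" and "orth_proj Prt"
    and "n \<ge> 1"
    and "degree P \<le> n"
    and "\<forall>x\<in>{-1..1}. qsp_prod n phi x $ 1 $ 1 = poly P (complex_of_real x)"
    and "sv_decomp Pr Prt (Prt ** U ** Pr) d dt s psi psit"
  shows "(if odd n
          then sv_odd (\<lambda>t. poly P (complex_of_real t)) d dt s psi psit = Prt ** U_Phi n phi U Pr Prt ** Pr
          else sv_even (\<lambda>t. poly P (complex_of_real t)) d dt s psi = Pr ** U_Phi n phi U Pr Prt ** Pr)"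
proof -
  have onb: "onb_of_img Pr d psi"
    using assms(7) by (simp add: sv_decomp_def)
  have PP: "Pr ** Pr = Pr"
    using assms(2) by (simp add: orth_proj_def)
  have f: "\<forall>x\<in>{0..1}. qsp_prod n phi x $ 1 $ 1 = poly P (complex_of_real x)"
    using assms(6) by simp
  note basis = U_Phi_sv_basis[OF assms(1-3) f assms(7)]
  show ?thesis
  proof (cases "odd n")
    case True
    have "sv_odd (\<lambda>t. poly P (complex_of_real t)) d dt s psi psit = Prt ** U_Phi n phi U Pr Prt ** Pr"
    proof (rule matrix_eq_on_onb[OF onb sv_odd_mult_orth_proj[OF assms(2) onb]])
      show "(Prt ** U_Phi n phi U Pr Prt ** Pr) ** Pr = Prt ** U_Phi n phi U Pr Prt ** Pr"
        by (simp add: matrix_mul_assoc[symmetric] PP)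
    qed (use basis True in simp)
    with True show ?thesis
      by simp
  next
    case False
    have "sv_even (\<lambda>t. poly P (complex_of_real t)) d dt s psi = Pr ** U_Phi n phi U Pr Prt ** Pr"
    proof (rule matrix_eq_on_onb[OF onb sv_even_mult_orth_proj[OF assms(2) onb]])
      show "(Pr ** U_Phi n phi U Pr Prt ** Pr) ** Pr = Pr ** U_Phi n phi U Pr Prt ** Pr"
        by (simp add: matrix_mul_assoc[symmetric] PP)
    qed (use basis False in simp)
    with False show ?thesis
      by simp
  qed
qed

end
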